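(* (Rohlin's Lemma for isometries) Let $S\subseteq\mathbb N$ be infinite. Then the set $\{g\in{\rm Iso}(\mathbb U): \exists n\in S\ g^n=1\}$ is dense in ${\rm Iso}(\mathbb U)$.
   Context: The Urysohn metric space $\mathbb U$ is, up to isometry, the unique complete separable metric space such that every isometric embedding of a finite metric space $\mathbf A$ into $\mathbb U$ extends to any one-point metric extension $\mathbf A\cup\{y\}$. ${\rm Iso}(\mathbb U)$ is its isometry group with the topology of pointwise convergence (basic neighbourhoods of the identity: $\{h: d(hx,x)<\epsilon\ \forall x\in\mathbf A\}$, $\mathbf A$ finite, $\epsilon>0$). *)

theory Defs
  imports "HOL-Analysis.Analysis"
begin

text \<open>A one-point metric extension of A is given by the distances
r a > 0 from the new point y to the points a of A, subject to the triangle inequalities.\<close>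
definition urysohn_extension_property :: "('a::metric_space) itself \<Rightarrow> bool" where
  "urysohn_extension_property _ \<longleftrightarrow>
     (\<forall>(A::'a set) (r::'a \<Rightarrow> real). finite A \<longrightarrow>
        (\<forall>a\<in>A. r a > 0) \<longrightarrow>
        (\<forall>a\<in>A. \<forall>b\<in>A. \<bar>r a - r b\<bar> \<le> dist a b \<and> dist a b \<le> r a + r b) \<longrightarrow>
        (\<exists>z. \<forall>a\<in>A. dist z a = r a))"

definition urysohn_space :: "('a::polish_space) itself \<Rightarrow> bool" where
  "urysohn_space T \<longleftrightarrow> urysohn_extension_property T"

definition isometries :: "('a::metric_space \<Rightarrow> 'a) set" where
  "isometries = {f. (\<forall>x y. dist (f x) (f y) = dist x y) \<and> surj f}"

end

theory Submission
  imports Defs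
begin

text \<open>Given an isometry \<open>g\<close>, a finite set \<open>A\<close> and \<open>\<delta> > 0\<close>, choose \<open>n \<in> S\<close> with
  \<open>n \<delta>\<close> above the diameter of \<open>B = A \<union> g A\<close>. On \<open>\<int>/n \<times> B\<close>, with \<open>(i, a)\<close> standing for
  \<open>p\<^sup>i a\<close>, put \<open>\<rho>((i, a), (j, b)) = min (n \<delta>) (min {d(a, g\<^sup>m b) + |m| \<delta> : |m| < n, m \<equiv> j - i})\<close>.
  This pseudometric agrees with \<open>d\<close> on the layer \<open>{0} \<times> B\<close>, is invariant under the shift
  \<open>(i, a) \<mapsto> (i + 1, a)\<close> of period \<open>n\<close>, and puts \<open>(1, a)\<close> within \<open>\<delta>\<close> of \<open>(0, g a)\<close>.
  Realizing it in \<open>U\<close> by the extension property turns the shift into a partial isometry \<open>p\<close>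
  of period \<open>n\<close> on a finite set, with \<open>d(p a, g a) \<le> \<delta>\<close> on \<open>A\<close>.

  A finite partial isometry of period \<open>n\<close> is a bijection of its domain, so extending it to
  one more point only requires adding the whole orbit of that point: glue \<open>n\<close> new points to
  the domain by shortest paths (an amalgamation, again realized in \<open>U\<close>) and rotate them.
  Running through a dense sequence gives a periodic isometry of a dense set, whose continuous
  extension is an isometry \<open>h\<close> of \<open>U\<close> with \<open>h\<^sup>n = 1\<close> that is \<open>\<delta>\<close>-close to \<open>g\<close> on \<open>A\<close>.\<close>

section \<open>Realizing finite pseudometrics\<close>

definition pseudometric_on :: "'i set \<Rightarrow> ('i \<Rightarrow> 'i \<Rightarrow> real) \<Rightarrow> bool" where
  "pseudometric_on I \<rho> \<longleftrightarrow> (\<forall>i\<in>I. \<rho> i i = 0) \<and> (\<forall>i\<in>I. \<forall>j\<in>I. \<rho> i j = \<rho> j i)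
     \<and> (\<forall>i\<in>I. \<forall>j\<in>I. \<forall>k\<in>I. \<rho> i k \<le> \<rho> i j + \<rho> j k)"

definition realizes :: "'i set \<Rightarrow> ('i \<Rightarrow> 'i \<Rightarrow> real) \<Rightarrow> ('i \<Rightarrow> 'a::metric_space) \<Rightarrow> bool" where
  "realizes I \<rho> e \<longleftrightarrow> (\<forall>i\<in>I. \<forall>j\<in>I. dist (e i) (e j) = \<rho> i j)"

definition katetov_on :: "'a::metric_space set \<Rightarrow> ('a \<Rightarrow> real) \<Rightarrow> bool" where
  "katetov_on X r \<longleftrightarrow> (\<forall>x\<in>X. \<forall>y\<in>X. \<bar>r x - r y\<bar> \<le> dist x y \<and> dist x y \<le> r x + r y)"

lemma katetov_on_nonneg: "katetov_on X r \<Longrightarrow> x \<in> X \<Longrightarrow> r x \<ge> 0"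
  unfolding katetov_on_def by (metis dist_self mult_2 zero_le_double_add_iff_zero_le_single_add)

lemma katetov_on_dist_isometric:
  assumes "\<forall>x\<in>X. \<forall>y\<in>X. dist (f x) (f y) = dist x y"
  shows "katetov_on X (\<lambda>x. dist a (f x))"
  unfolding katetov_on_def
proof (intro ballI)
  fix x y assume "x \<in> X" "y \<in> X"
  then have "dist (f x) (f y) = dist x y" using assms by blast
  moreover have "dist a (f x) \<le> dist a (f y) + dist (f x) (f y)"
    "dist a (f y) \<le> dist a (f x) + dist (f x) (f y)" "dist (f x) (f y) \<le> dist a (f x) + dist a (f y)"
    by (metis dist_commute dist_triangle)+
  ultimately show "\<bar>dist a (f x) - dist a (f y)\<bar> \<le> dist x y \<and> dist x y \<le> dist a (f x) + dist a (f y)"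
    by linarith
qed

lemma urysohn_extension:
  assumes "urysohn_extension_property TYPE('a::metric_space)"
    and "finite A" "\<forall>a\<in>A. r a > 0" "katetov_on A r"
  shows "\<exists>z::'a. \<forall>a\<in>A. dist z a = r a"
  using assms unfolding urysohn_extension_property_def katetov_on_def by blast

text \<open>The extension property only speaks of new points at positive distance; a pseudometric may
  also demand a point at distance 0 from an existing one, which is then that point itself.\<close>
lemma urysohn_extend_point:
  fixes e :: "'i \<Rightarrow> 'a::metric_space"
  assumes U: "urysohn_extension_property TYPE('a)" and \<rho>: "pseudometric_on I \<rho>"
    and L: "finite L" "L \<subseteq> I" and i: "i \<in> I" and e: "realizes L \<rho> e"
  shows "\<exists>z. \<forall>l\<in>L. dist z (e l) = \<rho> i l"
proof (cases "\<exists>j\<in>L. \<rho> i j = 0")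
  case True
  then obtain j where j: "j \<in> L" "\<rho> i j = 0" by blast
  have "dist (e j) (e l) = \<rho> i l" if "l \<in> L" for l
  proof -
    have "\<rho> i l \<le> \<rho> i j + \<rho> j l" "\<rho> j l \<le> \<rho> j i + \<rho> i l" "\<rho> j i = \<rho> i j"
      using \<rho> L i j that unfolding pseudometric_on_def by blast+
    then show ?thesis using e j that unfolding realizes_def by auto
  qed
  then show ?thesis by blast
next
  case False
  define r where "r a = \<rho> i (inv_into L e a)" for a
  have r: "r (e l) = \<rho> i l" if "l \<in> L" for l
  proof -
    define l' where "l' = inv_into L e (e l)"
    have l': "l' \<in> L" "e l' = e l"
      using that unfolding l'_def by (auto simp: inv_into_into f_inv_into_f)
    then have "\<rho> l l' = 0" using e that unfolding realizes_def by (metis dist_self)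
    moreover have "\<rho> i l \<le> \<rho> i l' + \<rho> l' l" "\<rho> i l' \<le> \<rho> i l + \<rho> l l'" "\<rho> l' l = \<rho> l l'"
      using \<rho> L i l'(1) that unfolding pseudometric_on_def by blast+
    ultimately show ?thesis unfolding r_def l'_def by linarith
  qed
  have "\<exists>z. \<forall>a\<in>e ` L. dist z a = r a"
  proof (rule urysohn_extension[OF U])
    show "finite (e ` L)" using L by simp
    have "\<rho> i l \<ge> 0" if "l \<in> L" for l
    proof -
      have "\<rho> i i \<le> \<rho> i l + \<rho> l i" "\<rho> i i = 0" "\<rho> l i = \<rho> i l"
        using \<rho> i L that unfolding pseudometric_on_def by blast+
      then show ?thesis by linarith
    qed
    then show "\<forall>a\<in>e ` L. r a > 0" using False r by force
    show "katetov_on (e ` L) r"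
      unfolding katetov_on_def
    proof (intro ballI)
      fix a b assume "a \<in> e ` L" "b \<in> e ` L"
      then obtain l m where lm: "l \<in> L" "a = e l" "m \<in> L" "b = e m" by auto
      have "\<rho> i l \<le> \<rho> i m + \<rho> m l" "\<rho> i m \<le> \<rho> i l + \<rho> l m" "\<rho> l m \<le> \<rho> l i + \<rho> i m"
        "\<rho> l i = \<rho> i l" "\<rho> m l = \<rho> l m"
        using \<rho> L i lm unfolding pseudometric_on_def by blast+
      then show "\<bar>r a - r b\<bar> \<le> dist a b \<and> dist a b \<le> r a + r b"
        using lm r e unfolding realizes_def by auto
    qed
  qed
  then show ?thesis using r by auto
qed

lemma realizes_insert:
  fixes e :: "'i \<Rightarrow> 'a::metric_space"
  assumes U: "urysohn_extension_property TYPE('a)" and \<rho>: "pseudometric_on I \<rho>"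
    and L: "finite L" "L \<subseteq> I" and i: "i \<in> I" "i \<notin> L" and e: "realizes L \<rho> e"
  shows "\<exists>z. realizes (insert i L) \<rho> (e(i := z))"
proof -
  obtain z where z: "\<forall>l\<in>L. dist z (e l) = \<rho> i l"
    using urysohn_extend_point[OF U \<rho> L i(1) e] by blast
  have "\<rho> i i = 0" "\<forall>l\<in>L. \<rho> l i = \<rho> i l"
    using \<rho> i L unfolding pseudometric_on_def by blast+
  then have "realizes (insert i L) \<rho> (e(i := z))"
    using z e i(2) unfolding realizes_def by (auto simp: dist_commute)
  then show ?thesis ..
qed

lemma realizes_extend:
  fixes e :: "'i \<Rightarrow> 'a::metric_space"
  assumes U: "urysohn_extension_property TYPE('a)" and \<rho>: "pseudometric_on I \<rho>"
    and I: "finite I" and J: "J \<subseteq> I" and e: "realizes J \<rho> e"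
  shows "\<exists>e'. (\<forall>j\<in>J. e' j = e j) \<and> realizes I \<rho> e'"
proof -
  have "\<exists>e'. (\<forall>j\<in>J. e' j = e j) \<and> realizes (J \<union> K) \<rho> e'" if "finite K" "K \<subseteq> I" for K
    using that
  proof (induction K rule: finite_induct)
    case empty
    then show ?case using e by auto
  next
    case (insert i K)
    then obtain e' where e': "\<forall>j\<in>J. e' j = e j" "realizes (J \<union> K) \<rho> e'" by auto
    show ?case
    proof (cases "i \<in> J")
      case True
      then show ?thesis using e' by (auto simp: insert_absorb)
    next
      case False
      have "finite (J \<union> K)" "J \<union> K \<subseteq> I" using insert J I finite_subset by auto
      then obtain z where "realizes (insert i (J \<union> K)) \<rho> (e'(i := z))"
        using realizes_insert[OF U \<rho> _ _ _ _ e'(2)] insert False by blast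
      moreover have "\<forall>j\<in>J. (e'(i := z)) j = e j" using e'(1) False by simp
      ultimately show ?thesis by (metis Un_insert_right)
    qed
  qed
  from this[OF I order_refl] show ?thesis using J by (simp add: Un_absorb1)
qed

section \<open>Periodic partial isometries and amalgamation\<close>

definition periodic_isometry_on :: "nat \<Rightarrow> 'a::metric_space set \<Rightarrow> ('a \<Rightarrow> 'a) \<Rightarrow> bool" where
  "periodic_isometry_on n D p \<longleftrightarrow> p ` D \<subseteq> D \<and> (\<forall>x\<in>D. \<forall>y\<in>D. dist (p x) (p y) = dist x y)
     \<and> (\<forall>x\<in>D. (p ^^ n) x = x)"

lemma funpow_in:
  assumes "f ` A \<subseteq> A" "x \<in> A"
  shows "(f ^^ m) x \<in> A"
  using assms by (induction m) auto

lemma funpow_eq_on: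
  assumes "f ` A \<subseteq> A" "\<forall>x\<in>A. g x = f x" "x \<in> A"
  shows "(g ^^ m) x = (f ^^ m) x"
  using assms by (induction m) (auto simp: funpow_in)

lemma periodic_isometry_on_funpow_dist:
  assumes "periodic_isometry_on n D p" "x \<in> D" "y \<in> D"
  shows "dist ((p ^^ m) x) ((p ^^ m) y) = dist x y"
  using assms by (induction m) (auto simp: periodic_isometry_on_def funpow_in)

lemma periodic_isometry_on_image:
  assumes "periodic_isometry_on n D p" "n > 0"
  shows "p ` D = D"
proof
  show "p ` D \<subseteq> D" using assms(1) unfolding periodic_isometry_on_def by blast
  show "D \<subseteq> p ` D"
  proof
    fix y assume y: "y \<in> D"
    obtain k where n: "n = Suc k" using assms(2) gr0_implies_Suc by blast
    have "y = p ((p ^^ k) y)"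
      using assms(1) y unfolding periodic_isometry_on_def n by (simp add: funpow_swap1)
    moreover have "(p ^^ k) y \<in> D"
      using assms(1) y unfolding periodic_isometry_on_def by (blast intro: funpow_in)
    ultimately show "y \<in> p ` D" by blast
  qed
qed

lemma realizes_periodic_symmetry:
  assumes \<sigma>: "\<sigma> ` I \<subseteq> I" "\<forall>i\<in>I. \<forall>j\<in>I. \<rho> (\<sigma> i) (\<sigma> j) = \<rho> i j" "\<forall>i\<in>I. (\<sigma> ^^ n) i = i"
    and e: "realizes I \<rho> e"
  shows "\<exists>p. periodic_isometry_on n (e ` I) p \<and> (\<forall>i\<in>I. p (e i) = e (\<sigma> i))"
proof -
  define p where "p y = e (\<sigma> (inv_into I e y))" for y
  have p: "p (e i) = e (\<sigma> i)" if "i \<in> I" for i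
  proof -
    define j where "j = inv_into I e (e i)"
    have j: "j \<in> I" "e j = e i" using that unfolding j_def by (auto simp: inv_into_into f_inv_into_f)
    then have "\<rho> (\<sigma> j) (\<sigma> i) = 0" using e \<sigma>(2) that unfolding realizes_def by (metis dist_self)
    moreover have "\<sigma> j \<in> I" "\<sigma> i \<in> I" using \<sigma>(1) j(1) that by auto
    ultimately have "e (\<sigma> j) = e (\<sigma> i)" using e unfolding realizes_def by (metis dist_eq_0_iff)
    then show ?thesis unfolding p_def j_def by simp
  qed
  have p_funpow: "(p ^^ m) (e i) = e ((\<sigma> ^^ m) i)" if "i \<in> I" for i m
    using that by (induction m) (auto simp: p funpow_in[OF \<sigma>(1)])
  have "periodic_isometry_on n (e ` I) p"
    unfolding periodic_isometry_on_def using \<sigma> e p p_funpow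
    by (auto simp: realizes_def image_subset_iff)
  then show ?thesis using p by blast
qed

lemma realizes_periodic_extension:
  fixes e :: "'i \<Rightarrow> 'a::metric_space"
  assumes U: "urysohn_extension_property TYPE('a)" and \<rho>: "pseudometric_on I \<rho>" and I: "finite I"
    and \<sigma>: "\<sigma> ` I \<subseteq> I" "\<forall>i\<in>I. \<forall>j\<in>I. \<rho> (\<sigma> i) (\<sigma> j) = \<rho> i j" "\<forall>i\<in>I. (\<sigma> ^^ n) i = i"
    and J: "J \<subseteq> I" and e: "realizes J \<rho> e"
  shows "\<exists>e' p. (\<forall>j\<in>J. e' j = e j) \<and> realizes I \<rho> e' \<and> periodic_isometry_on n (e' ` I) p
    \<and> (\<forall>i\<in>I. p (e' i) = e' (\<sigma> i))"
proof -
  obtain e' where "\<forall>j\<in>J. e' j = e j" "realizes I \<rho> e'"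
    using realizes_extend[OF U \<rho> I J e] by blast
  then show ?thesis using realizes_periodic_symmetry[OF \<sigma>] by blast
qed

text \<open>The amalgam glues a new point \<open>Inr k\<close> to the finite space \<open>X\<close> at the distances
  prescribed by the Katetov function \<open>r k\<close>, and measures every other distance along
  the shortest path through \<open>X\<close>.\<close>
definition amalgam_dist :: "'a::metric_space set \<Rightarrow> ('k \<Rightarrow> 'a \<Rightarrow> real) \<Rightarrow> 'a + 'k \<Rightarrow> 'a + 'k \<Rightarrow> real"
  where "amalgam_dist X r u v =
    (if u = v then 0 else Min ((\<lambda>x. case_sum dist r u x + case_sum dist r v x) ` X))"

lemma amalgam_dist_commute: "amalgam_dist X r u v = amalgam_dist X r v u"
  unfolding amalgam_dist_def by (simp add: add.commute)

lemma katetov_on_amalgam: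
  assumes "\<forall>k\<in>Y. katetov_on X (r k)" "u \<in> Inl ` X \<union> Inr ` Y"
  shows "katetov_on X (case_sum dist r u)"
  using assms katetov_on_dist_isometric[of X id] by auto

lemma amalgam_dist_Inl:
  assumes X: "finite X" and r: "\<forall>k\<in>Y. katetov_on X (r k)"
    and u: "u \<in> Inl ` X \<union> Inr ` Y" and x: "x \<in> X"
  shows "amalgam_dist X r (Inl x) u = case_sum dist r u x"
proof (cases "u = Inl x")
  case False
  have k: "katetov_on X (case_sum dist r u)" using katetov_on_amalgam[OF r u] .
  have "Min ((\<lambda>y. dist x y + case_sum dist r u y) ` X) = case_sum dist r u x"
  proof (rule Min_eqI)
    show "finite ((\<lambda>y. dist x y + case_sum dist r u y) ` X)" using X by simp
    have "case_sum dist r u x \<le> dist x y + case_sum dist r u y" if "y \<in> X" for y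
    proof -
      have "\<bar>case_sum dist r u x - case_sum dist r u y\<bar> \<le> dist x y"
        using k x that unfolding katetov_on_def by blast
      then show ?thesis by linarith
    qed
    then show "case_sum dist r u x \<le> z" if "z \<in> (\<lambda>y. dist x y + case_sum dist r u y) ` X" for z
      using that by blast
    show "case_sum dist r u x \<in> (\<lambda>y. dist x y + case_sum dist r u y) ` X"
      using x by force
  qed
  then show ?thesis using False unfolding amalgam_dist_def by simp
qed (simp add: amalgam_dist_def)

lemma pseudometric_on_amalgam:
  assumes X: "finite X" "X \<noteq> {}" and r: "\<forall>k\<in>Y. katetov_on X (r k)"
  shows "pseudometric_on (Inl ` X \<union> Inr ` Y) (amalgam_dist X r)"
proof -
  let ?D = "Inl ` X \<union> Inr ` Y"
  let ?R = "case_sum dist r"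
  have k: "katetov_on X (?R u)" if "u \<in> ?D" for u using katetov_on_amalgam[OF r that] .
  have attained: "\<exists>x\<in>X. amalgam_dist X r u v = ?R u x + ?R v x" if "u \<noteq> v" for u v
  proof -
    have "Min ((\<lambda>x. ?R u x + ?R v x) ` X) \<in> (\<lambda>x. ?R u x + ?R v x) ` X"
      using X by (intro Min_in) auto
    then show ?thesis using that unfolding amalgam_dist_def by auto
  qed
  have nonneg: "amalgam_dist X r u v \<ge> 0" if "u \<in> ?D" "v \<in> ?D" for u v
  proof (cases "u = v")
    case False
    then obtain x where "x \<in> X" "amalgam_dist X r u v = ?R u x + ?R v x" using attained by blast
    then show ?thesis using katetov_on_nonneg[OF k] that by simp
  qed (simp add: amalgam_dist_def)
  have "amalgam_dist X r u w \<le> amalgam_dist X r u v + amalgam_dist X r v w"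
    if D: "u \<in> ?D" "v \<in> ?D" "w \<in> ?D" for u v w
  proof (cases "u = w \<or> u = v \<or> v = w")
    case True
    have "amalgam_dist X r u u = 0" for u by (simp add: amalgam_dist_def)
    then show ?thesis using True nonneg[OF D(1,2)] nonneg[OF D(2,3)] by auto
  next
    case False
    obtain x where x: "x \<in> X" "amalgam_dist X r u v = ?R u x + ?R v x"
      using attained False by blast
    obtain y where y: "y \<in> X" "amalgam_dist X r v w = ?R v y + ?R w y"
      using attained False by blast
    have "\<bar>?R w x - ?R w y\<bar> \<le> dist x y" "dist x y \<le> ?R v x + ?R v y"
      using k[OF D(3)] k[OF D(2)] x(1) y(1) unfolding katetov_on_def by blast+
    moreover have "amalgam_dist X r u w \<le> ?R u x + ?R w x"
      using False X x unfolding amalgam_dist_def by auto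
    ultimately show ?thesis using x y by linarith
  qed
  then show ?thesis
    unfolding pseudometric_on_def by (auto simp: amalgam_dist_def add.commute)
qed

lemma amalgam_dist_invariant:
  assumes \<tau>: "\<tau> ` X = X" and \<sigma>: "\<sigma> u = \<sigma> v \<longleftrightarrow> u = v"
    and R: "\<forall>x\<in>X. case_sum dist r (\<sigma> u) (\<tau> x) = case_sum dist r u x"
      "\<forall>x\<in>X. case_sum dist r (\<sigma> v) (\<tau> x) = case_sum dist r v x"
  shows "amalgam_dist X r (\<sigma> u) (\<sigma> v) = amalgam_dist X r u v"
proof -
  have "(\<lambda>x. case_sum dist r (\<sigma> u) x + case_sum dist r (\<sigma> v) x) ` X
      = (\<lambda>x. case_sum dist r u x + case_sum dist r v x) ` X"
    by (subst (1) \<tau>[symmetric]) (auto simp: image_image R intro!: image_cong)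
  then show ?thesis using \<sigma> unfolding amalgam_dist_def by simp
qed

text \<open>\<open>Inr k\<close> is to become \<open>p\<^sup>k x\<close>; as \<open>p\<^sup>n\<close> is the identity, its distance to \<open>f\<close> is that of
  \<open>x\<close> to \<open>p\<^sup>n\<^sup>-\<^sup>k f\<close>.\<close>
definition orbit_point_dist :: "nat \<Rightarrow> ('a::metric_space \<Rightarrow> 'a) \<Rightarrow> 'a \<Rightarrow> nat \<Rightarrow> 'a \<Rightarrow> real" where
  "orbit_point_dist n p x k f = dist x ((p ^^ (n - k)) f)"

definition orbit_rotation :: "nat \<Rightarrow> ('a \<Rightarrow> 'a) \<Rightarrow> 'a + nat \<Rightarrow> 'a + nat" where
  "orbit_rotation n p = case_sum (\<lambda>f. Inl (p f)) (\<lambda>k. Inr (Suc k mod n))"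

lemma katetov_on_orbit_point_dist:
  "periodic_isometry_on n F p \<Longrightarrow> katetov_on F (orbit_point_dist n p x k)"
  unfolding orbit_point_dist_def
  by (intro katetov_on_dist_isometric ballI periodic_isometry_on_funpow_dist)

lemma orbit_point_dist_rotate:
  assumes p: "periodic_isometry_on n F p" and "k < n" "f \<in> F"
  shows "orbit_point_dist n p x (Suc k mod n) (p f) = orbit_point_dist n p x k f"
proof (cases "Suc k < n")
  case True
  then have "n - k = Suc (n - Suc k)" by simp
  then show ?thesis
    using True unfolding orbit_point_dist_def by (simp add: funpow_Suc_right del: funpow.simps)
next
  case False
  then have "Suc k = n" using assms by simp
  moreover have "(p ^^ n) (p f) = p f" using p assms(3) unfolding periodic_isometry_on_def by auto
  ultimately show ?thesis unfolding orbit_point_dist_def by auto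
qed

lemma orbit_rotation_image:
  "periodic_isometry_on n F p \<Longrightarrow> n > 0 \<Longrightarrow>
    orbit_rotation n p ` (Inl ` F \<union> Inr ` {..<n}) \<subseteq> Inl ` F \<union> Inr ` {..<n}"
  unfolding orbit_rotation_def periodic_isometry_on_def by auto

lemma funpow_orbit_rotation:
  assumes p: "periodic_isometry_on n F p" and u: "u \<in> Inl ` F \<union> Inr ` {..<n}"
  shows "(orbit_rotation n p ^^ n) u = u"
proof -
  have "(orbit_rotation n p ^^ m) (Inl f) = Inl ((p ^^ m) f)" for m f
    by (induction m) (auto simp: orbit_rotation_def)
  moreover have "(orbit_rotation n p ^^ m) (Inr k) = Inr ((k + m) mod n)" if "k < n" for m k
    using that by (induction m) (auto simp: orbit_rotation_def mod_Suc_eq)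
  ultimately show ?thesis using p u unfolding periodic_isometry_on_def by auto
qed

lemma amalgam_dist_orbit_rotation:
  assumes p: "periodic_isometry_on n F p" and n: "n > 0"
    and uv: "u \<in> Inl ` F \<union> Inr ` {..<n}" "v \<in> Inl ` F \<union> Inr ` {..<n}"
  shows "amalgam_dist F (orbit_point_dist n p x) (orbit_rotation n p u) (orbit_rotation n p v)
    = amalgam_dist F (orbit_point_dist n p x) u v"
proof (rule amalgam_dist_invariant[where \<tau> = p])
  show "p ` F = F" using periodic_isometry_on_image[OF p n] .
  have "inj_on p F"
    using p unfolding periodic_isometry_on_def inj_on_def by (metis dist_eq_0_iff)
  moreover have "Suc k mod n = Suc l mod n \<longleftrightarrow> k = l" if "k < n" "l < n" for k l
    using that by (metis Suc_lessI mod_Suc mod_less n nat.inject nat.distinct(1))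
  ultimately show "orbit_rotation n p u = orbit_rotation n p v \<longleftrightarrow> u = v"
    using uv unfolding orbit_rotation_def inj_on_def by auto
  have "\<forall>y\<in>F. case_sum dist (orbit_point_dist n p x) (orbit_rotation n p w) (p y)
      = case_sum dist (orbit_point_dist n p x) w y" if "w \<in> Inl ` F \<union> Inr ` {..<n}" for w
    using that p orbit_point_dist_rotate[OF p]
    unfolding orbit_rotation_def periodic_isometry_on_def by auto
  then show "\<forall>y\<in>F. case_sum dist (orbit_point_dist n p x) (orbit_rotation n p u) (p y)
      = case_sum dist (orbit_point_dist n p x) u y"
    "\<forall>y\<in>F. case_sum dist (orbit_point_dist n p x) (orbit_rotation n p v) (p y)
      = case_sum dist (orbit_point_dist n p x) v y"
    using uv by blast+
qed

lemma periodic_isometry_on_insert: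
  fixes F :: "'a::metric_space set"
  assumes U: "urysohn_extension_property TYPE('a)" and n: "n > 0"
    and F: "finite F" "F \<noteq> {}" and p: "periodic_isometry_on n F p"
  shows "\<exists>F' p'. finite F' \<and> periodic_isometry_on n F' p' \<and> insert x F \<subseteq> F'
    \<and> (\<forall>y\<in>F. p' y = p y)"
proof -
  have pF: "p y \<in> F" "(p ^^ n) y = y" if "y \<in> F" for y
    using p that unfolding periodic_isometry_on_def by auto
  define I where "I = Inl ` F \<union> Inr ` {..<n}"
  define \<rho> where "\<rho> = amalgam_dist F (orbit_point_dist n p x)"
  have kat: "\<forall>k\<in>{..<n}. katetov_on F (orbit_point_dist n p x k)"
    using katetov_on_orbit_point_dist[OF p] by blast
  have \<rho>: "pseudometric_on I \<rho>"
    unfolding I_def \<rho>_def using pseudometric_on_amalgam[OF F kat] .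
  have \<rho>_Inl: "\<rho> (Inl y) u = case_sum dist (orbit_point_dist n p x) u y" if "y \<in> F" "u \<in> I" for y u
    using amalgam_dist_Inl[OF F(1) kat that(2)[unfolded I_def] that(1)] unfolding \<rho>_def .
  define J :: "('a + nat) set" where "J = insert (Inr 0) (Inl ` F)"
  define e :: "'a + nat \<Rightarrow> 'a" where "e = case_sum id (\<lambda>_. x)"
  have JI: "J \<subseteq> I" using n unfolding I_def J_def by auto
  have e_Inl: "dist (e (Inl y)) (e j) = \<rho> (Inl y) j" if "y \<in> F" "j \<in> J" for y j
    using that \<rho>_Inl[OF \<open>y \<in> F\<close>] JI pF(2) unfolding J_def e_def orbit_point_dist_def
    by (auto simp: dist_commute)
  have eJ: "realizes J \<rho> e"
    unfolding realizes_def
  proof (intro ballI)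
    fix i j assume "i \<in> J" "j \<in> J"
    then consider y where "i = Inl y" "y \<in> F" | z where "j = Inl z" "z \<in> F" | "i = Inr 0" "j = Inr 0"
      unfolding J_def by blast
    then show "dist (e i) (e j) = \<rho> i j"
    proof cases
      case 2
      then show ?thesis
        using e_Inl[OF _ \<open>i \<in> J\<close>] amalgam_dist_commute unfolding \<rho>_def by (metis dist_commute)
    qed (use e_Inl \<open>j \<in> J\<close> in \<open>auto simp: \<rho>_def amalgam_dist_def\<close>)
  qed
  have I: "finite I" using F unfolding I_def by simp
  have rotation: "orbit_rotation n p ` I \<subseteq> I"
    "\<forall>u\<in>I. \<forall>v\<in>I. \<rho> (orbit_rotation n p u) (orbit_rotation n p v) = \<rho> u v"
    "\<forall>u\<in>I. (orbit_rotation n p ^^ n) u = u"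
    unfolding I_def \<rho>_def
    using orbit_rotation_image[OF p n] amalgam_dist_orbit_rotation[OF p n] funpow_orbit_rotation[OF p]
    by blast+
  obtain e' p' where e': "\<forall>j\<in>J. e' j = e j" and p': "periodic_isometry_on n (e' ` I) p'"
    "\<forall>i\<in>I. p' (e' i) = e' (orbit_rotation n p i)"
    using realizes_periodic_extension[OF U \<rho> I rotation JI eJ] by blast
  have e'_Inl: "e' (Inl y) = y" "Inl y \<in> I" if "y \<in> F" for y
    using e' JI that unfolding J_def e_def by auto
  have "e' (Inr 0) = x" "Inr 0 \<in> I"
    using e' JI unfolding J_def e_def by auto
  then have "insert x F \<subseteq> e' ` I"
    using e'_Inl by (metis image_eqI insert_subset subsetI)
  moreover have "p' y = p y" if "y \<in> F" for y
    using p'(2) e'_Inl that pF(1)[OF that] unfolding orbit_rotation_def by (metis sum.simps(5))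
  ultimately show ?thesis using p' I by blast
qed

section \<open>Exhausting the space\<close>

lemma periodic_isometry_on_chain_Union:
  assumes q: "\<And>k. periodic_isometry_on n (G k) (q k)"
    and mono: "\<And>k. G k \<subseteq> G (Suc k)" and agree: "\<And>k. \<forall>y\<in>G k. q (Suc k) y = q k y"
  shows "\<exists>h. periodic_isometry_on n (\<Union>k. G k) h \<and> (\<forall>k. \<forall>y\<in>G k. h y = q k y)"
proof -
  have chain: "G k \<subseteq> G l \<and> (\<forall>y\<in>G k. q l y = q k y)" if "k \<le> l" for k l
    using that
  proof (induction l rule: dec_induct)
    case (step l)
    then show ?case using mono[of l] agree[of l] by auto
  qed simp
  define h where "h y = q (LEAST k. y \<in> G k) y" for y
  have h: "h y = q k y" if "y \<in> G k" for y k
  proof -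
    have "(LEAST k. y \<in> G k) \<le> k" "y \<in> G (LEAST k. y \<in> G k)"
      using that by (auto intro: Least_le LeastI)
    then show ?thesis unfolding h_def using chain by auto
  qed
  have common: "\<exists>k. x \<in> G k \<and> y \<in> G k" if xy: "x \<in> (\<Union>k. G k)" "y \<in> (\<Union>k. G k)" for x y
  proof -
    obtain k l where "x \<in> G k" "y \<in> G l" using xy by blast
    then show ?thesis using chain[of k "max k l"] chain[of l "max k l"] by auto
  qed
  have q_in: "q k ` G k \<subseteq> G k" for k
    using q[of k] unfolding periodic_isometry_on_def by blast
  have q_iso: "dist (q k x) (q k y) = dist x y" and q_per: "(q k ^^ n) x = x"
    if "x \<in> G k" "y \<in> G k" for k x y
    using q[of k] that unfolding periodic_isometry_on_def by auto
  have "periodic_isometry_on n (\<Union>k. G k) h"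
    unfolding periodic_isometry_on_def
  proof (intro conjI ballI)
    show "h ` (\<Union>k. G k) \<subseteq> (\<Union>k. G k)"
    proof (rule image_subsetI)
      fix y assume "y \<in> (\<Union>k. G k)"
      then obtain k where "y \<in> G k" by blast
      then show "h y \<in> (\<Union>k. G k)" using h q_in by blast
    qed
    fix x y assume "x \<in> (\<Union>k. G k)" "y \<in> (\<Union>k. G k)"
    then obtain k where k: "x \<in> G k" "y \<in> G k" using common by blast
    show "dist (h x) (h y) = dist x y" using h[OF k(1)] h[OF k(2)] q_iso[OF k] by simp
    show "(h ^^ n) x = x"
      using funpow_eq_on[OF q_in, where g = h and m = n] h q_per k by auto
  qed
  then show ?thesis using h by blast
qed

lemma eq_on_dense:
  fixes f g :: "'a::topological_space \<Rightarrow> 'b::t2_space"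
  assumes "closure D = UNIV" "continuous_on UNIV f" "continuous_on UNIV g" "\<forall>x\<in>D. f x = g x"
  shows "f x = g x"
  using closure_minimal[of D "{x. f x = g x}"] closed_Collect_eq[OF assms(2,3)] assms(1,4) by auto

lemma continuous_on_funpow:
  fixes f :: "'a::topological_space \<Rightarrow> 'a"
  assumes "continuous_on UNIV f"
  shows "continuous_on UNIV (f ^^ m)"
proof (induction m)
  case (Suc m)
  have "continuous_on UNIV (f \<circ> (f ^^ m))"
    by (rule continuous_on_compose[OF Suc.IH continuous_on_subset[OF assms subset_UNIV]])
  then show ?case by simp
qed (simp add: continuous_on_id)

lemma periodic_isometry_on_dense_extend:
  fixes h0 :: "'a::complete_space \<Rightarrow> 'a"
  assumes D: "closure D = UNIV" and n: "n > 0" and h0: "periodic_isometry_on n D h0"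
  shows "\<exists>h\<in>isometries. h ^^ n = id \<and> (\<forall>y\<in>D. h y = h0 y)"
proof -
  have "uniformly_continuous_on D h0"
    using h0 unfolding uniformly_continuous_on_def periodic_isometry_on_def by (metis dist_commute)
  then obtain h where "uniformly_continuous_on (closure D) h" and h: "\<forall>y\<in>D. h y = h0 y"
    using uniformly_continuous_on_extension_on_closure by metis
  then have hc: "continuous_on UNIV h" using D uniformly_continuous_imp_continuous by metis
  have iso_D: "dist (h x) (h y) = dist x y" if "x \<in> D" for x y
    by (rule eq_on_dense[OF D, where f = "\<lambda>y. dist (h x) (h y)"])
      (use that h h0 in \<open>auto intro!: continuous_intros hc simp: periodic_isometry_on_def\<close>)
  have iso: "dist (h x) (h y) = dist x y" for x y
    by (rule eq_on_dense[OF D, where f = "\<lambda>x. dist (h x) (h y)"])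
      (auto intro!: continuous_intros hc iso_D)
  have "(h ^^ n) x = id x" for x
  proof (rule eq_on_dense[OF D continuous_on_funpow[OF hc] continuous_on_id'])
    show "\<forall>y\<in>D. (h ^^ n) y = id y"
      using h h0 funpow_eq_on[where f = h0 and A = D and g = h and m = n]
      unfolding periodic_isometry_on_def by auto
  qed
  then have per: "h ^^ n = id" by (rule ext)
  obtain k where "n = Suc k" using n gr0_implies_Suc by blast
  then have "h ((h ^^ k) x) = x" for x using per by (metis comp_apply funpow.simps(2) id_apply)
  then have "surj h" by (rule surjI)
  then show ?thesis using iso per h unfolding isometries_def by blast
qed

lemma dense_sequence_exists:
  obtains s :: "nat \<Rightarrow> 'a::{metric_space,second_countable_topology}" where "closure (range s) = UNIV"
proof -
  obtain D :: "'a set" where D: "countable D" "\<And>U. open U \<Longrightarrow> U \<noteq> {} \<Longrightarrow> \<exists>y\<in>D. y \<in> U"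
    using countable_dense_exists by blast
  have "x \<in> closure D" for x
    unfolding closure_approachable
  proof (intro allI impI)
    fix e :: real assume "e > 0"
    then obtain y where "y \<in> D" "y \<in> ball x e" using D(2)[of "ball x e"] by auto
    then show "\<exists>y\<in>D. dist y x < e" by (auto simp: dist_commute)
  qed
  then have "closure D = UNIV" by auto
  moreover have "D \<noteq> {}" using D(2)[of UNIV] by auto
  ultimately show ?thesis using that range_from_nat_into[OF _ D(1)] by metis
qed

lemma periodic_isometry_on_dense_exhaust:
  fixes F :: "'a::{metric_space,second_countable_topology} set"
  assumes U: "urysohn_extension_property TYPE('a)" and n: "n > 0"
    and F: "finite F" "F \<noteq> {}" and p: "periodic_isometry_on n F p"
  shows "\<exists>D h. closure D = UNIV \<and> F \<subseteq> D \<and> periodic_isometry_on n D h \<and> (\<forall>y\<in>F. h y = p y)"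
proof -
  obtain s :: "nat \<Rightarrow> 'a" where s: "closure (range s) = UNIV" using dense_sequence_exists by blast
  define P where "P k c \<longleftrightarrow> finite (fst c) \<and> fst c \<noteq> {} \<and> periodic_isometry_on n (fst c) (snd c)
    \<and> (k = 0 \<longrightarrow> c = (F, p))" for k :: nat and c :: "'a set \<times> ('a \<Rightarrow> 'a)"
  define Q where "Q k c c' \<longleftrightarrow> insert (s k) (fst c) \<subseteq> fst c' \<and> (\<forall>y\<in>fst c. snd c' y = snd c y)"
    for k :: nat and c c' :: "'a set \<times> ('a \<Rightarrow> 'a)"
  have "\<exists>c. P 0 c" using F p unfolding P_def by auto
  moreover have "\<exists>c'. P (Suc k) c' \<and> Q k c c'" if "P k c" for k c
  proof -
    have c: "finite (fst c)" "fst c \<noteq> {}" "periodic_isometry_on n (fst c) (snd c)"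
      using that unfolding P_def by auto
    obtain F' p' where "finite F'" "periodic_isometry_on n F' p'"
      "insert (s k) (fst c) \<subseteq> F'" "\<forall>y\<in>fst c. p' y = snd c y"
      using periodic_isometry_on_insert[OF U n c, where x = "s k"] by blast
    then have "P (Suc k) (F', p') \<and> Q k c (F', p')" unfolding P_def Q_def by auto
    then show ?thesis by blast
  qed
  ultimately obtain c where c: "\<And>k. P k (c k) \<and> Q k (c k) (c (Suc k))"
    using dependent_nat_choice[of P Q] by blast
  define G where "G k = fst (c k)" for k
  have G: "periodic_isometry_on n (G k) (snd (c k))" "G k \<subseteq> G (Suc k)"
    "\<forall>y\<in>G k. snd (c (Suc k)) y = snd (c k) y" "s k \<in> G (Suc k)" for k
    using c[of k] unfolding P_def Q_def G_def by auto
  obtain h where h: "periodic_isometry_on n (\<Union>k. G k) h" "\<forall>k. \<forall>y\<in>G k. h y = snd (c k) y"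
    using periodic_isometry_on_chain_Union[of n G "\<lambda>k. snd (c k)", OF G(1-3)] by blast
  have "range s \<subseteq> (\<Union>k. G k)" using G(4) by blast
  then have "closure (\<Union>k. G k) = UNIV" using s closure_mono by blast
  moreover have "F = G 0" "\<forall>y\<in>F. h y = p y"
    using c[of 0] spec[OF h(2), of 0] unfolding P_def G_def by auto
  ultimately show ?thesis using h(1) by blast
qed

section \<open>Approximation by a periodic partial isometry\<close>

lemma isometries_funpow_dist:
  assumes "g \<in> isometries"
  shows "dist ((g ^^ k) x) ((g ^^ k) y) = dist x y"
  using assms by (induction k) (auto simp: isometries_def)

text \<open>\<open>iter_dist g a b m\<close> is \<open>dist a (g\<^sup>m b)\<close> for an integer \<open>m\<close>, written without the inverse of \<open>g\<close>.\<close>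
definition iter_dist :: "('a::metric_space \<Rightarrow> 'a) \<Rightarrow> 'a \<Rightarrow> 'a \<Rightarrow> int \<Rightarrow> real" where
  "iter_dist g a b m =
    (if m \<ge> 0 then dist a ((g ^^ nat m) b) else dist ((g ^^ nat (- m)) a) b)"

lemma iter_dist_nonneg: "iter_dist g a b m \<ge> 0"
  unfolding iter_dist_def by simp

lemma iter_dist_commute: "iter_dist g a b m = iter_dist g b a (- m)"
  unfolding iter_dist_def by (auto simp: dist_commute)

lemma iter_dist_funpow:
  assumes g: "g \<in> isometries"
  shows "dist ((g ^^ k) a) ((g ^^ l) b) = iter_dist g a b (int l - int k)"
proof (cases "k \<le> l")
  case True
  then have "(g ^^ l) b = (g ^^ k) ((g ^^ (l - k)) b)"
    by (metis funpow_add le_add_diff_inverse o_apply)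
  then show ?thesis using True isometries_funpow_dist[OF g] unfolding iter_dist_def
    by (simp add: nat_diff_distrib')
next
  case False
  then have "(g ^^ k) a = (g ^^ l) ((g ^^ (k - l)) a)"
    by (metis funpow_add le_add_diff_inverse o_apply nle_le)
  then show ?thesis using False isometries_funpow_dist[OF g] unfolding iter_dist_def
    by (simp add: nat_diff_distrib')
qed

lemma iter_dist_triangle:
  assumes g: "g \<in> isometries"
  shows "iter_dist g a c (m1 + m2) \<le> iter_dist g a b m1 + iter_dist g b c m2"
proof -
  \<comment> \<open>translate all three exponents by \<open>N\<close> so that they become natural numbers\<close>
  define N where "N = \<bar>m1\<bar> + \<bar>m2\<bar>"
  define k where "k = nat N"
  define l where "l = nat (N + m1)"
  define j where "j = nat (N + m1 + m2)"
  have "m1 = int l - int k" "m2 = int j - int l" "m1 + m2 = int j - int k"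
    unfolding k_def l_def j_def N_def by auto
  then have "iter_dist g a b m1 = dist ((g ^^ k) a) ((g ^^ l) b)"
    "iter_dist g b c m2 = dist ((g ^^ l) b) ((g ^^ j) c)"
    "iter_dist g a c (m1 + m2) = dist ((g ^^ k) a) ((g ^^ j) c)"
    using iter_dist_funpow[OF g] by presburger+
  then show ?thesis using dist_triangle[of "(g ^^ k) a" "(g ^^ j) c" "(g ^^ l) b"] by simp
qed

definition short_residues :: "nat \<Rightarrow> int \<Rightarrow> int set" where
  "short_residues n d = {m. \<bar>m\<bar> < int n \<and> m mod int n = d mod int n}"

lemma finite_short_residues: "finite (short_residues n d)"
  by (rule finite_subset[of _ "{- int n<..<int n}"]) (auto simp: short_residues_def)

lemma short_residues_nonempty: "n > 0 \<Longrightarrow> d mod int n \<in> short_residues n d"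
  unfolding short_residues_def by auto

lemma short_residues_cong: "d mod int n = d' mod int n \<Longrightarrow> short_residues n d = short_residues n d'"
  unfolding short_residues_def by simp

lemma short_residues_zero: "short_residues n 0 = {0}" if n: "n > 0"
proof -
  have "m = 0" if m: "\<bar>m\<bar> < int n" "m mod int n = 0" for m
  proof -
    obtain k where k: "m = int n * k" using m(2) by (metis mod_0_imp_dvd dvd_def)
    then have "int n * \<bar>k\<bar> < int n * 1" using m(1) by (simp add: abs_mult)
    then have "\<bar>k\<bar> < 1" using n by (simp only: mult_less_cancel_left)
    then have "k = 0" by simp
    then show ?thesis using k by simp
  qed
  then show ?thesis using n unfolding short_residues_def by auto
qed

lemma uminus_in_short_residues: "m \<in> short_residues n d \<Longrightarrow> - m \<in> short_residues n (- d)"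
  unfolding short_residues_def
  by (auto simp: mod_minus_eq[of m "int n", symmetric] mod_minus_eq[of d "int n", symmetric]
      intro: arg_cong[where f="\<lambda>x. (- x) mod int n"])

lemma short_residues_uminus: "short_residues n (- d) = uminus ` short_residues n d"
proof
  show "uminus ` short_residues n d \<subseteq> short_residues n (- d)"
    using uminus_in_short_residues by blast
  show "short_residues n (- d) \<subseteq> uminus ` short_residues n d"
    using uminus_in_short_residues[of _ n "- d"] by force
qed

lemma short_residues_add:
  assumes "m1 \<in> short_residues n d1" "m2 \<in> short_residues n d2" "\<bar>m1 + m2\<bar> < int n"
  shows "m1 + m2 \<in> short_residues n (d1 + d2)"
  using assms mod_add_cong[where a = m1 and a' = d1 and b = m2 and b' = d2 and c = "int n"]
  unfolding short_residues_def by simp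

text \<open>The point \<open>(i, a)\<close> stands for \<open>p\<^sup>i a\<close>, where \<open>p\<close> is the periodic approximation of
  \<open>g\<close> to be built. Its distance to \<open>(j, b)\<close> is the cheapest way to reach \<open>b\<close> by some
  \<open>m \<equiv> j - i\<close> steps along a \<open>g\<close>-orbit, each step costing \<open>\<delta>\<close>; the cap \<open>n \<delta>\<close> only matters
  beyond the diameter of the given points.\<close>
definition rohlin_dist :: "('a::metric_space \<Rightarrow> 'a) \<Rightarrow> nat \<Rightarrow> real \<Rightarrow> int \<times> 'a \<Rightarrow> int \<times> 'a \<Rightarrow> real"
  where "rohlin_dist g n \<delta> x y = min (real n * \<delta>)
    (Min ((\<lambda>m. iter_dist g (snd x) (snd y) m + of_int \<bar>m\<bar> * \<delta>) ` short_residues n (fst y - fst x)))"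

lemma rohlin_dist_le:
  assumes "m \<in> short_residues n (fst y - fst x)"
  shows "rohlin_dist g n \<delta> x y \<le> iter_dist g (snd x) (snd y) m + of_int \<bar>m\<bar> * \<delta>"
  using assms finite_short_residues unfolding rohlin_dist_def by (simp add: min.coboundedI2)

lemma rohlin_dist_attained:
  assumes "n > 0"
  shows "\<exists>m\<in>short_residues n (fst y - fst x).
    rohlin_dist g n \<delta> x y = min (real n * \<delta>) (iter_dist g (snd x) (snd y) m + of_int \<bar>m\<bar> * \<delta>)"
proof -
  let ?c = "\<lambda>m. iter_dist g (snd x) (snd y) m + of_int \<bar>m\<bar> * \<delta>"
  have "Min (?c ` short_residues n (fst y - fst x)) \<in> ?c ` short_residues n (fst y - fst x)"
    using finite_short_residues short_residues_nonempty[OF assms] by (intro Min_in) auto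
  then show ?thesis unfolding rohlin_dist_def by auto
qed

lemma rohlin_dist_same_layer:
  assumes "n > 0"
  shows "rohlin_dist g n \<delta> (i, a) (i, b) = min (real n * \<delta>) (dist a b)"
  using short_residues_zero[OF assms] unfolding rohlin_dist_def by (simp add: iter_dist_def)

lemma rohlin_dist_step:
  assumes "n \<ge> 2"
  shows "rohlin_dist g n \<delta> (1, a) (0, g a) \<le> \<delta>"
proof -
  have "- 1 \<in> short_residues n (0 - 1)" using assms unfolding short_residues_def by auto
  then show ?thesis using rohlin_dist_le[of "- 1" n "(0, g a)" "(1, a)" g \<delta>] by (simp add: iter_dist_def)
qed

definition layer_shift :: "nat \<Rightarrow> int \<times> 'a \<Rightarrow> int \<times> 'a" where
  "layer_shift n x = ((fst x + 1) mod int n, snd x)"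

lemma rohlin_dist_layer_shift:
  "rohlin_dist g n \<delta> (layer_shift n x) (layer_shift n y) = rohlin_dist g n \<delta> x y"
proof -
  have "short_residues n ((fst y + 1) mod int n - (fst x + 1) mod int n) = short_residues n (fst y - fst x)"
    by (rule short_residues_cong) (simp add: mod_diff_eq)
  then show ?thesis unfolding rohlin_dist_def layer_shift_def by simp
qed

lemma funpow_layer_shift:
  assumes "fst x \<in> {0..<int n}"
  shows "(layer_shift n ^^ m) x = ((fst x + int m) mod int n, snd x)"
proof (induction m)
  case (Suc m)
  have "((fst x + int m) mod int n + 1) mod int n = (fst x + int (Suc m)) mod int n"
    by (simp add: mod_add_left_eq add.assoc add.commute[of "int m" 1])
  then show ?case using Suc by (simp add: layer_shift_def)
qed (use assms in auto)

lemma rohlin_dist_commute: "rohlin_dist g n \<delta> x y = rohlin_dist g n \<delta> y x"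
proof -
  have "short_residues n (fst x - fst y) = uminus ` short_residues n (fst y - fst x)"
    using short_residues_uminus[of n "fst y - fst x"] by simp
  then show ?thesis
    unfolding rohlin_dist_def by (simp add: image_image iter_dist_commute[of g "snd y"])
qed

lemma rohlin_dist_triangle:
  assumes g: "g \<in> isometries" and n: "n > 0" and \<delta>: "\<delta> \<ge> 0"
  shows "rohlin_dist g n \<delta> x z \<le> rohlin_dist g n \<delta> x y + rohlin_dist g n \<delta> y z"
proof -
  obtain m1 where m1: "m1 \<in> short_residues n (fst y - fst x)"
    "rohlin_dist g n \<delta> x y = min (real n * \<delta>) (iter_dist g (snd x) (snd y) m1 + of_int \<bar>m1\<bar> * \<delta>)"
    using rohlin_dist_attained[OF n] by blast
  obtain m2 where m2: "m2 \<in> short_residues n (fst z - fst y)"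
    "rohlin_dist g n \<delta> y z = min (real n * \<delta>) (iter_dist g (snd y) (snd z) m2 + of_int \<bar>m2\<bar> * \<delta>)"
    using rohlin_dist_attained[OF n] by blast
  let ?c1 = "iter_dist g (snd x) (snd y) m1 + of_int \<bar>m1\<bar> * \<delta>"
  let ?c2 = "iter_dist g (snd y) (snd z) m2 + of_int \<bar>m2\<bar> * \<delta>"
  have "rohlin_dist g n \<delta> x z \<le> min (real n * \<delta>) (?c1 + ?c2)"
  proof (cases "\<bar>m1 + m2\<bar> < int n")
    case True
    then have "m1 + m2 \<in> short_residues n (fst z - fst x)"
      using short_residues_add[OF m1(1) m2(1)] by simp
    then have "rohlin_dist g n \<delta> x z \<le> iter_dist g (snd x) (snd z) (m1 + m2) + of_int \<bar>m1 + m2\<bar> * \<delta>"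
      by (rule rohlin_dist_le)
    also have "\<dots> \<le> ?c1 + ?c2"
      using iter_dist_triangle[OF g, of "snd x" "snd z" m1 m2 "snd y"]
        mult_right_mono[OF abs_triangle_ineq[of m1 m2, THEN of_int_le_iff[THEN iffD2]] \<delta>]
      by (simp add: distrib_right)
    finally show ?thesis unfolding rohlin_dist_def by simp
  next
    case False
    then have "real n * \<delta> \<le> (of_int \<bar>m1\<bar> + of_int \<bar>m2\<bar>) * \<delta>"
      using \<delta> by (intro mult_right_mono) auto
    then have "real n * \<delta> \<le> ?c1 + ?c2"
      using iter_dist_nonneg[of g "snd x" "snd y" m1] iter_dist_nonneg[of g "snd y" "snd z" m2]
      by (simp add: distrib_right)
    then show ?thesis unfolding rohlin_dist_def by simp
  qed
  moreover have "?c1 \<ge> 0" "?c2 \<ge> 0"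
    by (intro add_nonneg_nonneg mult_nonneg_nonneg iter_dist_nonneg \<delta> of_int_nonneg abs_ge_zero)+
  moreover have "real n * \<delta> \<ge> 0" using \<delta> by simp
  moreover have "min C (a + b) \<le> min C a + min C b" if "a \<ge> 0" "b \<ge> 0" "C \<ge> 0" for C a b :: real
    using that unfolding min_def by auto
  ultimately show ?thesis unfolding m1(2) m2(2) by (meson order_trans)
qed

lemma pseudometric_on_rohlin_dist:
  assumes "g \<in> isometries" "n > 0" "\<delta> \<ge> 0"
  shows "pseudometric_on I (rohlin_dist g n \<delta>)"
proof -
  have "rohlin_dist g n \<delta> x x = 0" for x
    using rohlin_dist_same_layer[OF assms(2), of g \<delta> "fst x" "snd x" "snd x"] assms(3) by simp
  then show ?thesis
    unfolding pseudometric_on_def using rohlin_dist_commute rohlin_dist_triangle[OF assms] by blast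
qed

lemma periodic_isometry_on_approximation:
  fixes g :: "'a::metric_space \<Rightarrow> 'a"
  assumes U: "urysohn_extension_property TYPE('a)" and g: "g \<in> isometries"
    and A: "finite A" and \<delta>: "\<delta> \<ge> 0" and n: "n \<ge> 2"
    and diam: "\<forall>a\<in>A \<union> g ` A. \<forall>b\<in>A \<union> g ` A. dist a b \<le> real n * \<delta>"
  shows "\<exists>F p. finite F \<and> periodic_isometry_on n F p \<and> A \<subseteq> F \<and> (\<forall>a\<in>A. dist (p a) (g a) \<le> \<delta>)"
proof -
  have n0: "n > 0" using n by simp
  define B where "B = A \<union> g ` A"
  define I where "I = {0..<int n} \<times> B"
  define \<rho> where "\<rho> = rohlin_dist g n \<delta>"
  have \<rho>: "pseudometric_on I \<rho>" unfolding \<rho>_def using pseudometric_on_rohlin_dist[OF g n0 \<delta>] .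
  have I: "finite I" unfolding I_def B_def using A by simp
  have "(layer_shift n ^^ n) x = x" if "x \<in> I" for x
    using that funpow_layer_shift[of x n n] unfolding I_def by (cases x) auto
  moreover have "layer_shift n ` I \<subseteq> I" unfolding I_def layer_shift_def using n0 by auto
  ultimately have shift: "layer_shift n ` I \<subseteq> I"
    "\<forall>x\<in>I. \<forall>y\<in>I. \<rho> (layer_shift n x) (layer_shift n y) = \<rho> x y" "\<forall>x\<in>I. (layer_shift n ^^ n) x = x"
    unfolding \<rho>_def by (simp_all add: rohlin_dist_layer_shift)
  define J where "J = {0::int} \<times> B"
  have JI: "J \<subseteq> I" unfolding I_def J_def using n0 by auto
  have "realizes J \<rho> snd"
    unfolding realizes_def
  proof (intro ballI)
    fix x y assume "x \<in> J" "y \<in> J"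
    then have "x = (0, snd x)" "y = (0, snd y)" "dist (snd x) (snd y) \<le> real n * \<delta>"
      using diam unfolding J_def B_def by auto
    then show "dist (snd x) (snd y) = \<rho> x y"
      unfolding \<rho>_def by (metis rohlin_dist_same_layer[OF n0] min.absorb2)
  qed
  then obtain e p where e: "\<forall>j\<in>J. e j = snd j" "realizes I \<rho> e"
    and p: "periodic_isometry_on n (e ` I) p" "\<forall>i\<in>I. p (e i) = e (layer_shift n i)"
    using realizes_periodic_extension[OF U \<rho> I shift JI] by blast
  have e0: "e (0, b) = b" "(0, b) \<in> I" if "b \<in> B" for b
    using e(1) JI that unfolding J_def by auto
  have "A \<subseteq> e ` I" using e0 unfolding B_def by (metis UnI1 image_eqI subsetI)
  moreover have "dist (p a) (g a) \<le> \<delta>" if a: "a \<in> A" for a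
  proof -
    have a_B: "a \<in> B" "g a \<in> B" and one: "(1, a) \<in> I" using a n unfolding B_def I_def by auto
    have "p a = e (1, a)"
      using p(2) e0(1)[OF a_B(1)] e0(2)[OF a_B(1)] n unfolding layer_shift_def by force
    then have "dist (p a) (g a) = \<rho> (1, a) (0, g a)"
      using e(2) one e0[OF a_B(2)] unfolding realizes_def by metis
    then show ?thesis using rohlin_dist_step[OF n] unfolding \<rho>_def by simp
  qed
  ultimately show ?thesis using p(1) I by blast
qed

section \<open>Density\<close>

lemma infinite_nat_set_exceeds:
  assumes "infinite (S :: nat set)" "\<delta> > 0"
  shows "\<exists>n\<in>S. n \<ge> 2 \<and> C \<le> real n * \<delta>"
proof -
  obtain n where n: "n \<in> S" "n \<ge> max 2 (nat \<lceil>C / \<delta>\<rceil>)"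
    using assms(1) unfolding infinite_nat_iff_unbounded_le by blast
  then have "C / \<delta> \<le> real n" by linarith
  then show ?thesis using n assms(2) by (auto simp: divide_le_eq)
qed

lemma exists_periodic_isometry_near:
  fixes g :: "'a::polish_space \<Rightarrow> 'a"
  assumes U: "urysohn_extension_property TYPE('a)" and g: "g \<in> isometries"
    and A: "finite A" and \<epsilon>: "\<epsilon> > 0" and S: "infinite S"
  shows "\<exists>h\<in>isometries. (\<exists>n\<in>S. n > 0 \<and> h ^^ n = id) \<and> (\<forall>a\<in>A. dist (h a) (g a) < \<epsilon>)"
proof -
  \<comment> \<open>any extra point, only to make the set nonempty\<close>
  define A' where "A' = insert undefined A"
  define \<delta> where "\<delta> = \<epsilon> / 2"
  have \<delta>: "\<delta> > 0" "\<delta> < \<epsilon>" unfolding \<delta>_def using \<epsilon> by auto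
  define B where "B = A' \<union> g ` A'"
  obtain n where n: "n \<in> S" "n \<ge> 2" "diameter B \<le> real n * \<delta>"
    using infinite_nat_set_exceeds[OF S \<delta>(1)] by blast
  have "bounded B" unfolding B_def A'_def using A by auto
  then have "dist a b \<le> real n * \<delta>" if "a \<in> B" "b \<in> B" for a b
    using diameter_bounded_bound[OF _ that] n(3) by fastforce
  then have diam: "\<forall>a\<in>A' \<union> g ` A'. \<forall>b\<in>A' \<union> g ` A'. dist a b \<le> real n * \<delta>"
    unfolding B_def by blast
  have "finite A'" "n > 0" using A n(2) unfolding A'_def by auto
  then obtain F p where Fp: "finite F" "periodic_isometry_on n F p" "A' \<subseteq> F"
    "\<forall>a\<in>A'. dist (p a) (g a) \<le> \<delta>"
    using periodic_isometry_on_approximation[OF U g _ less_imp_le[OF \<delta>(1)] n(2) diam] by blast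
  have "F \<noteq> {}" using Fp(3) unfolding A'_def by blast
  then obtain D h0 where D: "closure D = UNIV" "F \<subseteq> D" "periodic_isometry_on n D h0"
    "\<forall>y\<in>F. h0 y = p y"
    using periodic_isometry_on_dense_exhaust[OF U \<open>n > 0\<close> Fp(1) _ Fp(2)] by blast
  obtain h where h: "h \<in> isometries" "h ^^ n = id" "\<forall>y\<in>D. h y = h0 y"
    using periodic_isometry_on_dense_extend[OF D(1) \<open>n > 0\<close> D(3)] by blast
  have "dist (h a) (g a) < \<epsilon>" if "a \<in> A" for a
  proof -
    have "a \<in> A'" "a \<in> F" "a \<in> D" using that Fp(3) D(2) unfolding A'_def by auto
    then have "h a = p a" "dist (p a) (g a) \<le> \<delta>" using h(3) D(4) Fp(4) by auto
    then show ?thesis using \<delta>(2) by simp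
  qed
  then show ?thesis using h n(1) \<open>n > 0\<close> by blast
qed

lemma in_closure_fun_metricI:
  fixes g :: "'a \<Rightarrow> 'b::metric_space"
  assumes approx: "\<And>A \<epsilon>. finite A \<Longrightarrow> \<epsilon> > 0 \<Longrightarrow> \<exists>h\<in>T. \<forall>a\<in>A. dist (h a) (g a) < \<epsilon>"
  shows "g \<in> closure T"
  unfolding closure_iff_nhds_not_empty
proof (intro allI impI)
  fix W V :: "('a \<Rightarrow> 'b) set" assume "V \<subseteq> W" "open V" "g \<in> V"
  then obtain X where X: "g \<in> (\<Pi>\<^sub>E i\<in>UNIV. X i)" "\<forall>i. open (X i)" "finite {i. X i \<noteq> UNIV}"
    "(\<Pi>\<^sub>E i\<in>UNIV. X i) \<subseteq> V"
    using product_topology_open_contains_basis[of "\<lambda>_. euclidean" UNIV V g]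
    unfolding open_fun_def by auto
  define A where "A = {i. X i \<noteq> UNIV}"
  have "\<exists>r>0. ball (g i) r \<subseteq> X i" for i
    using X(1,2) open_contains_ball_eq by (metis PiE_iff UNIV_I)
  then obtain r where r: "\<And>i. r i > 0" "\<And>i. ball (g i) (r i) \<subseteq> X i" by metis
  define \<epsilon> where "\<epsilon> = Min (insert 1 (r ` A))"
  have "finite A" using X(3) unfolding A_def .
  then have "\<epsilon> > 0" "\<And>i. i \<in> A \<Longrightarrow> \<epsilon> \<le> r i" unfolding \<epsilon>_def using r(1) by auto
  then obtain h where h: "h \<in> T" "\<forall>a\<in>A. dist (h a) (g a) < \<epsilon>"
    using approx \<open>finite A\<close> by blast
  have "h i \<in> X i" for i
  proof (cases "i \<in> A")
    case True
    then have "h i \<in> ball (g i) (r i)"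
      using h(2) \<open>\<And>i. i \<in> A \<Longrightarrow> \<epsilon> \<le> r i\<close> by (fastforce simp: dist_commute)
    then show ?thesis using r(2) by blast
  qed (simp add: A_def)
  then have "h \<in> V" using X(4) by (auto simp: PiE_iff)
  then show "T \<inter> W \<noteq> {}" using h(1) \<open>V \<subseteq> W\<close> by blast
qed

theorem mainTheorem16:
  fixes S :: "nat set"
  assumes "urysohn_space TYPE('a::polish_space)"
    and "infinite S"
  shows "isometries \<subseteq>
           closure {g :: 'a \<Rightarrow> 'a. g \<in> isometries \<and> (\<exists>n\<in>S. n > 0 \<and> g ^^ n = id)}"
proof
  fix g :: "'a \<Rightarrow> 'a" assume g: "g \<in> isometries"
  show "g \<in> closure {g. g \<in> isometries \<and> (\<exists>n\<in>S. n > 0 \<and> g ^^ n = id)}"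
  proof (rule in_closure_fun_metricI)
    fix A :: "'a set" and \<epsilon> :: real assume "finite A" "\<epsilon> > 0"
    then obtain h where "h \<in> isometries" "\<exists>n\<in>S. n > 0 \<and> h ^^ n = id" "\<forall>a\<in>A. dist (h a) (g a) < \<epsilon>"
      using exists_periodic_isometry_near[OF assms(1)[unfolded urysohn_space_def] g _ _ assms(2)]
      by blast
    then show "\<exists>h\<in>{g. g \<in> isometries \<and> (\<exists>n\<in>S. n > 0 \<and> g ^^ n = id)}. \<forall>a\<in>A. dist (h a) (g a) < \<epsilon>"
      by blast
  qed
qed

end
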